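(* Let $G$ be a graph such that either $G$ has more than one connected component containing an edge, or $G$ has a connected component containing at least three vertices. Then $\mathcal{Z}^{\mathrm{TE}}_+(G)$ is not isomorphic to any tree.
   Context: PSD forcing: vertices are colored blue or white; if $B$ is the current set of blue vertices, $C$ a connected component of $G-B$, and $u$ a blue vertex with $N_G(u)\cap V(C)=\{v\}$, then $u$ may force $v$ to become blue. A PSD forcing set is a set of initially blue vertices from which repeated application of this rule turns every vertex blue; $\mathrm{Z}_+(G)$ is the minimum size of a PSD forcing set. $\mathcal{Z}^{\mathrm{TE}}_+(G)$ has as vertices the minimum PSD forcing sets of $G$, with $S_1S_2$ an edge iff $S_1\setminus S_2=\{v_1\}$ and $S_2\setminus S_1=\{v_2\}$ for some vertices $v_1,v_2$. *)

theory Defs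
  imports Main
begin

definition graph :: "'a set \<Rightarrow> ('a \<Rightarrow> 'a \<Rightarrow> bool) \<Rightarrow> bool" where
  "graph V E \<longleftrightarrow> finite V \<and> (\<forall>u v. E u v \<longrightarrow> u \<in> V \<and> v \<in> V \<and> u \<noteq> v \<and> E v u)"

definition conn_in :: "('a \<Rightarrow> 'a \<Rightarrow> bool) \<Rightarrow> 'a set \<Rightarrow> 'a \<Rightarrow> 'a \<Rightarrow> bool" where
  "conn_in E W u v \<longleftrightarrow> u \<in> W \<and> v \<in> W \<and> (\<lambda>x y. E x y \<and> x \<in> W \<and> y \<in> W)\<^sup>*\<^sup>* u v"

definition comp_in :: "('a \<Rightarrow> 'a \<Rightarrow> bool) \<Rightarrow> 'a set \<Rightarrow> 'a \<Rightarrow> 'a set" where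
  "comp_in E W v = {w. conn_in E W v w}"

definition psd_force :: "'a set \<Rightarrow> ('a \<Rightarrow> 'a \<Rightarrow> bool) \<Rightarrow> 'a set \<Rightarrow> 'a \<Rightarrow> 'a \<Rightarrow> bool" where
  "psd_force V E B u v \<longleftrightarrow> u \<in> B \<and> v \<in> V - B \<and>
     {w. E u w} \<inter> comp_in E (V - B) v = {v}"

inductive psd_reach :: "'a set \<Rightarrow> ('a \<Rightarrow> 'a \<Rightarrow> bool) \<Rightarrow> 'a set \<Rightarrow> 'a set \<Rightarrow> bool"
  for V E S where
  start: "psd_reach V E S S"
| step: "psd_reach V E S B \<Longrightarrow> psd_force V E B u v \<Longrightarrow> psd_reach V E S (insert v B)"

definition psd_forcing_set :: "'a set \<Rightarrow> ('a \<Rightarrow> 'a \<Rightarrow> bool) \<Rightarrow> 'a set \<Rightarrow> bool" where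
  "psd_forcing_set V E S \<longleftrightarrow> S \<subseteq> V \<and> psd_reach V E S V"

definition Zplus :: "'a set \<Rightarrow> ('a \<Rightarrow> 'a \<Rightarrow> bool) \<Rightarrow> nat" where
  "Zplus V E = Min {card S | S. psd_forcing_set V E S}"

definition min_psd_forcing_set :: "'a set \<Rightarrow> ('a \<Rightarrow> 'a \<Rightarrow> bool) \<Rightarrow> 'a set \<Rightarrow> bool" where
  "min_psd_forcing_set V E S \<longleftrightarrow> psd_forcing_set V E S \<and> card S = Zplus V E"

definition TE_vertices :: "'a set \<Rightarrow> ('a \<Rightarrow> 'a \<Rightarrow> bool) \<Rightarrow> 'a set set" where
  "TE_vertices V E = {S. min_psd_forcing_set V E S}"

definition TE_edge :: "'a set \<Rightarrow> ('a \<Rightarrow> 'a \<Rightarrow> bool) \<Rightarrow> 'a set \<Rightarrow> 'a set \<Rightarrow> bool" where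
  "TE_edge V E S1 S2 \<longleftrightarrow> S1 \<in> TE_vertices V E \<and> S2 \<in> TE_vertices V E \<and>
     (\<exists>v1 v2. S1 - S2 = {v1} \<and> S2 - S1 = {v2})"

definition connected_graph :: "'a set \<Rightarrow> ('a \<Rightarrow> 'a \<Rightarrow> bool) \<Rightarrow> bool" where
  "connected_graph V E \<longleftrightarrow> V \<noteq> {} \<and> (\<forall>u\<in>V. \<forall>v\<in>V. conn_in E V u v)"

definition is_cycle :: "('a \<Rightarrow> 'a \<Rightarrow> bool) \<Rightarrow> 'a list \<Rightarrow> bool" where
  "is_cycle E cs \<longleftrightarrow> length cs \<ge> 3 \<and> distinct cs \<and>
     (\<forall>i. Suc i < length cs \<longrightarrow> E (cs ! i) (cs ! Suc i)) \<and> E (last cs) (hd cs)"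

definition acyclic_graph :: "'a set \<Rightarrow> ('a \<Rightarrow> 'a \<Rightarrow> bool) \<Rightarrow> bool" where
  "acyclic_graph V E \<longleftrightarrow> \<not> (\<exists>cs. set cs \<subseteq> V \<and> is_cycle E cs)"

definition is_tree :: "'a set \<Rightarrow> ('a \<Rightarrow> 'a \<Rightarrow> bool) \<Rightarrow> bool" where
  "is_tree V E \<longleftrightarrow> graph V E \<and> connected_graph V E \<and> acyclic_graph V E"

definition graph_iso :: "'a set \<Rightarrow> ('a \<Rightarrow> 'a \<Rightarrow> bool) \<Rightarrow> 'b set \<Rightarrow> ('b \<Rightarrow> 'b \<Rightarrow> bool) \<Rightarrow> ('a \<Rightarrow> 'b) \<Rightarrow> bool" where
  "graph_iso V1 E1 V2 E2 f \<longleftrightarrow> bij_betw f V1 V2 \<and>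
     (\<forall>u\<in>V1. \<forall>v\<in>V1. E1 u v \<longleftrightarrow> E2 (f u) (f v))"

end

theory Submission
  imports Defs
begin

text \<open>A tree has no cycles, so it suffices to find a 3- or 4-cycle in the token exchange
  graph. If \<open>u\<close> forces \<open>v\<close> at a minimum PSD forcing set \<open>S\<close>, then \<open>S - {u} \<union> {v}\<close> is
  again minimum (there \<open>v\<close> forces \<open>u\<close> back), and it is adjacent to \<open>S\<close>. Two forces at \<open>S\<close>
  with a common source or a common target therefore give a triangle. Every component with an
  edge receives a force from \<open>S\<close>; in a component with at least three vertices, repeated swaps
  and a descent into ever smaller white components produce two such forces. Forces into two
  different components commute, and swapping them in both orders gives a 4-cycle.\<close>

lemma conn_in_memD: "conn_in E W u v \<Longrightarrow> u \<in> W \<and> v \<in> W"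
  by (simp add: conn_in_def)

lemma conn_in_refl: "v \<in> W \<Longrightarrow> conn_in E W v v"
  by (simp add: conn_in_def)

lemma conn_in_step: "conn_in E W v x \<Longrightarrow> E x y \<Longrightarrow> y \<in> W \<Longrightarrow> conn_in E W v y"
  unfolding conn_in_def by (auto intro: rtranclp.rtrancl_into_rtrancl)

lemma conn_in_induct [consumes 1, case_names refl step]:
  assumes "conn_in E W v w" and "P v"
    and "\<And>x y. conn_in E W v x \<Longrightarrow> P x \<Longrightarrow> E x y \<Longrightarrow> x \<in> W \<Longrightarrow> y \<in> W \<Longrightarrow> P y"
  shows "P w"
proof -
  have "(\<lambda>x y. E x y \<and> x \<in> W \<and> y \<in> W)\<^sup>*\<^sup>* v w" and "v \<in> W"
    using assms(1) by (simp_all add: conn_in_def)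
  then have "P w \<and> conn_in E W v w"
    by (induction rule: rtranclp_induct) (auto intro: assms(2,3) conn_in_refl conn_in_step)
  then show ?thesis ..
qed

lemma conn_in_trans: "conn_in E W u v \<Longrightarrow> conn_in E W v w \<Longrightarrow> conn_in E W u w"
  unfolding conn_in_def by (meson rtranclp_trans)

lemma conn_in_sym:
  assumes "symp E" and "conn_in E W u v"
  shows "conn_in E W v u"
proof -
  have "symp (\<lambda>x y. E x y \<and> x \<in> W \<and> y \<in> W)"
    using assms(1) by (auto simp: symp_def)
  then show ?thesis
    using assms(2) unfolding conn_in_def by (blast dest: symp_rtranclp sympD)
qed

lemma conn_in_closed:
  assumes "conn_in E W v w" and "v \<in> H" and "\<And>p q. p \<in> H \<Longrightarrow> q \<in> W \<Longrightarrow> E p q \<Longrightarrow> q \<in> H"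
  shows "w \<in> H"
  using assms by (induction rule: conn_in_induct) auto

lemma conn_in_restrict:
  assumes "conn_in E W v w" and "\<And>z. conn_in E W v z \<Longrightarrow> z \<in> W'"
  shows "conn_in E W' v w"
proof -
  have "v \<in> W'"
    using assms by (meson conn_in_memD conn_in_refl)
  with assms show ?thesis
    by (induction rule: conn_in_induct) (auto intro: conn_in_refl conn_in_step)
qed

lemma conn_in_mono: "conn_in E W u v \<Longrightarrow> W \<subseteq> W' \<Longrightarrow> conn_in E W' u v"
  by (meson conn_in_memD conn_in_restrict subsetD)

lemma conn_in_last_step:
  assumes "conn_in E W v w" and "v \<noteq> w"
  shows "\<exists>p. conn_in E W v p \<and> p \<in> W \<and> E p w"
  using assms by (induction rule: conn_in_induct) auto

lemma comp_in_subset: "comp_in E W v \<subseteq> W"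
  by (auto simp: comp_in_def dest: conn_in_memD)

lemma graph_edgeD: "graph V E \<Longrightarrow> E u v \<Longrightarrow> u \<in> V \<and> v \<in> V \<and> u \<noteq> v \<and> E v u"
  unfolding graph_def by blast

lemma graph_symp: "graph V E \<Longrightarrow> symp E"
  by (auto simp: symp_def dest: graph_edgeD)

lemma not_acyclic_graph_triangle:
  assumes "E a b" "E b c" "E c a" "distinct [a, b, c]" "{a, b, c} \<subseteq> V"
  shows "\<not> acyclic_graph V E"
proof -
  have "is_cycle E [a, b, c]"
    using assms unfolding is_cycle_def by (auto simp: less_Suc_eq numeral_eq_Suc)
  moreover have "set [a, b, c] \<subseteq> V"
    using assms(5) by simp
  ultimately show ?thesis
    unfolding acyclic_graph_def by blast
qed

lemma not_acyclic_graph_square: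
  assumes "E a b" "E b c" "E c d" "E d a" "distinct [a, b, c, d]" "{a, b, c, d} \<subseteq> V"
  shows "\<not> acyclic_graph V E"
proof -
  have "is_cycle E [a, b, c, d]"
    using assms unfolding is_cycle_def by (auto simp: less_Suc_eq numeral_eq_Suc)
  moreover have "set [a, b, c, d] \<subseteq> V"
    using assms(6) by simp
  ultimately show ?thesis
    unfolding acyclic_graph_def by blast
qed

lemma graph_iso_acyclic:
  assumes iso: "graph_iso V1 E1 V2 E2 f" and "acyclic_graph V2 E2"
  shows "acyclic_graph V1 E1"
  unfolding acyclic_graph_def
proof
  assume "\<exists>cs. set cs \<subseteq> V1 \<and> is_cycle E1 cs"
  then obtain cs where cs: "set cs \<subseteq> V1" "is_cycle E1 cs"
    by blast
  have inj: "inj_on f (set cs)" and img: "set (map f cs) \<subseteq> V2"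
    using iso cs(1) unfolding graph_iso_def bij_betw_def by (auto intro: inj_on_subset)
  have edges: "E1 x y \<Longrightarrow> x \<in> set cs \<Longrightarrow> y \<in> set cs \<Longrightarrow> E2 (f x) (f y)" for x y
    using iso cs(1) unfolding graph_iso_def by blast
  have "cs \<noteq> []"
    using cs(2) unfolding is_cycle_def by auto
  then have "is_cycle E2 (map f cs)"
    using cs(2) inj edges unfolding is_cycle_def
    by (auto simp: distinct_map last_map hd_map)
  with img show False
    using assms(2) unfolding acyclic_graph_def by blast
qed

lemma psd_forceD: "psd_force V E B u v \<Longrightarrow> u \<in> B \<and> v \<in> V - B \<and> E u v"
  unfolding psd_force_def comp_in_def by (auto intro: conn_in_refl)

lemma psd_force_unique:
  "psd_force V E B u v \<Longrightarrow> E u w \<Longrightarrow> conn_in E (V - B) v w \<Longrightarrow> w = v"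
  unfolding psd_force_def comp_in_def by blast

lemma psd_forceI:
  assumes "u \<in> B" and "v \<in> V - B" and "E u v"
    and "\<And>w. E u w \<Longrightarrow> conn_in E (V - B) v w \<Longrightarrow> w = v"
  shows "psd_force V E B u v"
  using assms unfolding psd_force_def comp_in_def by (auto intro: conn_in_refl)

lemma psd_reach_subset: "psd_reach V E S B \<Longrightarrow> S \<subseteq> V \<Longrightarrow> B \<subseteq> V"
  by (induction rule: psd_reach.induct) (auto dest: psd_forceD)

lemma psd_reach_trans: "psd_reach V E S B \<Longrightarrow> psd_reach V E B C \<Longrightarrow> psd_reach V E S C"
  by (rotate_tac, induction rule: psd_reach.induct) (auto intro: psd_reach.step)

text \<open>A force stays valid when more vertices are blue, unless its target is already blue:
  the white component only shrinks.\<close>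
lemma psd_reach_mono:
  assumes "psd_reach V E S B" and "S \<subseteq> S'"
  shows "\<exists>B'. psd_reach V E S' B' \<and> B \<subseteq> B'"
  using assms
proof (induction rule: psd_reach.induct)
  case start
  then show ?case by (blast intro: psd_reach.start)
next
  case (step B u v)
  then obtain B' where B': "psd_reach V E S' B'" "B \<subseteq> B'" by blast
  show ?case
  proof (cases "v \<in> B'")
    case True
    with B' show ?thesis by blast
  next
    case False
    have "psd_force V E B' u v"
    proof (rule psd_forceI)
      fix w assume "E u w" and "conn_in E (V - B') v w"
      moreover from \<open>B \<subseteq> B'\<close> have "V - B' \<subseteq> V - B" by blast
      ultimately show "w = v"
        using step.hyps(2) by (meson conn_in_mono psd_force_unique)
    qed (use step.hyps(2) B'(2) False in \<open>auto dest: psd_forceD\<close>)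
    with B' show ?thesis by (blast intro: psd_reach.step)
  qed
qed

lemma psd_forcing_set_mono:
  assumes "psd_forcing_set V E S" and "S \<subseteq> S'" and "S' \<subseteq> V"
  shows "psd_forcing_set V E S'"
proof -
  obtain B where "psd_reach V E S' B" "V \<subseteq> B"
    using assms psd_reach_mono unfolding psd_forcing_set_def by blast
  moreover have "B \<subseteq> V"
    using psd_reach_subset \<open>psd_reach V E S' B\<close> \<open>S' \<subseteq> V\<close> .
  ultimately show ?thesis
    using \<open>S' \<subseteq> V\<close> unfolding psd_forcing_set_def by (metis subset_antisym)
qed

text \<open>The first force into a white component of \<open>G - S\<close> is already a valid force at \<open>S\<close>,
  since until then the component is untouched.\<close>
lemma psd_reach_force_into_component:
  assumes "graph V E" and "psd_reach V E S B" and "\<exists>z\<in>B. conn_in E (V - S) x z"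
  shows "\<exists>y x'. psd_force V E S y x' \<and> conn_in E (V - S) x x'"
  using assms(2,3)
proof (induction rule: psd_reach.induct)
  case start
  then show ?case by (auto dest: conn_in_memD)
next
  case (step B y v)
  show ?case
  proof (cases "\<exists>z\<in>B. conn_in E (V - S) x z")
    case True
    then show ?thesis by (rule step.IH)
  next
    case untouched: False
    then have xv: "conn_in E (V - S) x v"
      using step.prems by auto
    have yv: "y \<in> B" "v \<notin> B" "E y v" "E v y" "y \<in> V"
      using step.hyps(2) assms(1) by (auto dest: psd_forceD graph_edgeD)
    have "psd_force V E S y v"
    proof (rule psd_forceI)
      show "y \<in> S"
        using untouched yv xv by (meson DiffI conn_in_step)
      show "v \<in> V - S"
        using conn_in_memD[OF xv] by blast
      fix w assume w: "E y w" "conn_in E (V - S) v w"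
      have "conn_in E (V - B) v w"
        using w(2) by (rule conn_in_restrict)
          (use untouched xv in \<open>auto dest: conn_in_trans conn_in_memD\<close>)
      then show "w = v"
        using psd_force_unique step.hyps(2) w(1) by metis
    qed (use yv in simp)
    with xv show ?thesis by blast
  qed
qed

lemma psd_forcing_set_force_into_component:
  assumes "graph V E" and "psd_forcing_set V E S" and "x \<in> V - S"
  shows "\<exists>y x'. psd_force V E S y x' \<and> conn_in E (V - S) x x'"
  using assms psd_reach_force_into_component[of V E S V x]
  unfolding psd_forcing_set_def by (meson DiffD1 conn_in_refl)

lemma finite_psd_forcing_set_cards:
  assumes "finite V"
  shows "finite {card S |S. psd_forcing_set V E S}"
proof (rule finite_subset)
  show "{card S |S. psd_forcing_set V E S} \<subseteq> card ` Pow V"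
    unfolding psd_forcing_set_def by blast
qed (use assms in simp)

lemma Zplus_le_card: "finite V \<Longrightarrow> psd_forcing_set V E S \<Longrightarrow> Zplus V E \<le> card S"
  unfolding Zplus_def by (blast intro: Min_le finite_psd_forcing_set_cards)

lemma min_psd_forcing_set_exists:
  assumes "finite V"
  shows "\<exists>S. min_psd_forcing_set V E S"
proof -
  have "psd_forcing_set V E V"
    unfolding psd_forcing_set_def by (blast intro: psd_reach.start)
  then have "Zplus V E \<in> {card S |S. psd_forcing_set V E S}"
    unfolding Zplus_def using finite_psd_forcing_set_cards[OF assms] by (intro Min_in) auto
  then show ?thesis
    unfolding min_psd_forcing_set_def by auto
qed

lemma min_psd_forcing_setD:
  "min_psd_forcing_set V E S \<Longrightarrow> psd_forcing_set V E S \<and> S \<subseteq> V"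
  by (simp add: min_psd_forcing_set_def psd_forcing_set_def)

text \<open>A blue vertex with a neighbour but no white neighbour could be removed from a minimum
  PSD forcing set: any of its neighbours forces it back.\<close>
lemma min_psd_forcing_set_white_neighbour:
  assumes "graph V E" and S: "min_psd_forcing_set V E S" and "a \<in> S" and "E a b"
  shows "\<exists>t. E a t \<and> t \<notin> S"
proof (rule ccontr)
  assume "\<not> ?thesis"
  then have nbrs: "E a t \<Longrightarrow> t \<in> S" for t by blast
  have ba: "b \<in> S - {a}" "E b a" "a \<in> V"
    using nbrs[OF \<open>E a b\<close>] graph_edgeD[OF assms(1) \<open>E a b\<close>] by auto
  have "psd_force V E (S - {a}) b a"
  proof (rule psd_forceI)
    fix w assume "conn_in E (V - (S - {a})) a w"
    then have "w \<in> {a}"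
      by (rule conn_in_closed) (use nbrs in auto)
    then show "w = a" by simp
  qed (use ba in auto)
  then have "psd_reach V E (S - {a}) (insert a (S - {a}))"
    by (rule psd_reach.step[OF psd_reach.start])
  then have "psd_reach V E (S - {a}) S"
    using \<open>a \<in> S\<close> by (simp add: insert_absorb)
  moreover have "psd_reach V E S V" "S \<subseteq> V"
    using S by (simp_all add: min_psd_forcing_set_def psd_forcing_set_def)
  ultimately have "psd_forcing_set V E (S - {a})"
    unfolding psd_forcing_set_def by (blast intro: psd_reach_trans)
  then have "Zplus V E \<le> card (S - {a})"
    using Zplus_le_card assms(1) unfolding graph_def by blast
  moreover have "finite S"
    using assms(1) min_psd_forcing_setD[OF S] unfolding graph_def by (blast intro: finite_subset)
  then have "card (S - {a}) < card S"
    using \<open>a \<in> S\<close> by (rule card_Diff1_less)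
  ultimately show False
    using S unfolding min_psd_forcing_set_def by simp
qed

lemma min_psd_forcing_set_force_into_component:
  assumes "graph V E" and S: "min_psd_forcing_set V E S" and "E a b"
  shows "\<exists>u v. psd_force V E S u v \<and> conn_in E V a v"
proof -
  have a: "conn_in E V a a"
    using graph_edgeD[OF assms(1,3)] by (simp add: conn_in_refl)
  obtain x where x: "conn_in E V a x" "x \<notin> S"
  proof (cases "a \<in> S")
    case True
    then obtain t where "E a t" "t \<notin> S"
      using min_psd_forcing_set_white_neighbour[OF assms(1) S _ assms(3)] by blast
    moreover have "t \<in> V"
      using graph_edgeD[OF assms(1) \<open>E a t\<close>] by simp
    ultimately show ?thesis
      using that conn_in_step[OF a] by blast
  qed (use a in blast)
  then have "x \<in> V - S"
    using conn_in_memD by fast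
  then obtain u v where "psd_force V E S u v" "conn_in E (V - S) x v"
    using psd_forcing_set_force_into_component[OF assms(1)] min_psd_forcing_setD[OF S] by blast
  moreover have "conn_in E V x v"
    using conn_in_mono[OF \<open>conn_in E (V - S) x v\<close>] by blast
  ultimately show ?thesis
    using conn_in_trans[OF x(1)] by blast
qed

lemma psd_force_swap:
  assumes "graph V E" and f: "psd_force V E S u v"
  shows "psd_force V E (insert v (S - {u})) v u"
proof -
  let ?S' = "insert v (S - {u})" and ?C = "comp_in E (V - S) v"
  have uv: "u \<in> S" "v \<in> V - S" "E u v" "u \<in> V" "u \<noteq> v" "E v u"
    using psd_forceD[OF f] graph_edgeD[OF assms(1)] by auto
  text \<open>Since \<open>v\<close> is the only neighbour of \<open>u\<close> in \<open>?C\<close>, the white component of \<open>u\<close> after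
    the swap avoids \<open>?C\<close>.\<close>
  have closed: "q \<in> insert u (V - S - ?C)"
    if p: "p \<in> insert u (V - S - ?C)" and q: "q \<in> V - ?S'" and pq: "E p q" for p q
  proof (cases "q = u")
    case False
    have "q \<notin> ?C"
    proof
      assume qC: "q \<in> ?C"
      show False
      proof (cases "p = u")
        case True
        then show False
          using psd_force_unique[OF f] pq qC q by (auto simp: comp_in_def)
      next
        case False
        then have "p \<in> V - S" "conn_in E (V - S) v q"
          using p qC by (auto simp: comp_in_def)
        then have "p \<in> ?C"
          using conn_in_step graph_edgeD[OF assms(1) pq] by (fastforce simp: comp_in_def)
        then show False
          using p False by blast
      qed
    qed
    then show ?thesis
      using q False by blast
  qed simp
  show ?thesis
  proof (rule psd_forceI)
    fix w assume vw: "E v w" and uw: "conn_in E (V - ?S') u w"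
    have "w \<in> insert u (V - S - ?C)"
      using uw by (rule conn_in_closed) (use closed in auto)
    moreover have "w \<in> V - S \<Longrightarrow> w \<in> ?C"
      using conn_in_step[OF conn_in_refl[of v "V - S" E] vw] uv(2) by (simp add: comp_in_def)
    ultimately show "w = u" by blast
  qed (use uv in auto)
qed

lemma min_psd_forcing_set_swap:
  assumes "graph V E" and S: "min_psd_forcing_set V E S" and f: "psd_force V E S u v"
  shows "min_psd_forcing_set V E (insert v (S - {u}))"
proof -
  let ?S' = "insert v (S - {u})"
  have uv: "u \<in> S" "v \<in> V - S"
    using psd_forceD[OF f] by auto
  have SV: "psd_forcing_set V E S" "S \<subseteq> V"
    using min_psd_forcing_setD[OF S] by auto
  then have "finite S"
    using assms(1) unfolding graph_def by (metis finite_subset)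
  have "psd_reach V E ?S' (insert u ?S')"
    by (rule psd_reach.step[OF psd_reach.start psd_force_swap[OF assms(1) f]])
  moreover have "insert u ?S' = insert v S"
    using uv by blast
  moreover have "psd_forcing_set V E (insert v S)"
    by (rule psd_forcing_set_mono[OF SV(1)]) (use uv SV in auto)
  ultimately have "psd_reach V E ?S' V"
    unfolding psd_forcing_set_def by (metis psd_reach_trans)
  moreover have "?S' \<subseteq> V"
    using uv SV by blast
  moreover have "card ?S' = Suc (card (S - {u}))"
    using uv \<open>finite S\<close> by (intro card_insert_disjoint) auto
  ultimately show ?thesis
    using S card_Suc_Diff1[OF \<open>finite S\<close> uv(1)]
    by (simp add: min_psd_forcing_set_def psd_forcing_set_def)
qed

lemma comp_in_swap_subset:
  assumes "graph V E" and f: "psd_force V E S u v" and x: "x \<in> comp_in E (V - S) v"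
  shows "comp_in E (V - insert v (S - {u})) x \<subseteq> comp_in E (V - S) v - {v}"
proof
  let ?C = "comp_in E (V - S) v"
  fix w assume "w \<in> comp_in E (V - insert v (S - {u})) x"
  then have xw: "conn_in E (V - insert v (S - {u})) x w"
    by (simp add: comp_in_def)
  show "w \<in> ?C - {v}"
  proof (rule conn_in_closed[OF xw])
    show "x \<in> ?C - {v}"
      using x conn_in_memD[OF xw] by blast
    fix p q assume p: "p \<in> ?C - {v}" and q: "q \<in> V - insert v (S - {u})" and pq: "E p q"
    have "q \<noteq> u"
    proof
      assume "q = u"
      then have "p = v"
        using psd_force_unique[OF f, of p] graph_edgeD[OF assms(1) pq] p by (simp add: comp_in_def)
      then show False
        using p by blast
    qed
    then have "q \<in> V - S" "q \<noteq> v"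
      using q by auto
    then show "q \<in> ?C - {v}"
      using p pq conn_in_step by (fastforce simp: comp_in_def)
  qed
qed

lemma psd_force_swap_other_component:
  assumes "graph V E" and f1: "psd_force V E S u1 v1" and f2: "psd_force V E S u2 v2"
    and "\<not> conn_in E V v2 v1"
  shows "psd_force V E (insert v1 (S - {u1})) u2 v2"
proof -
  let ?S' = "insert v1 (S - {u1})" and ?H = "{w. conn_in E V v2 w}"
  have e2: "E v2 u2" "u2 \<in> V" "v2 \<in> V"
    using graph_edgeD[OF assms(1)] psd_forceD[OF f2] by blast+
  have v2H: "v2 \<in> ?H"
    using e2(3) by (simp add: conn_in_refl)
  have other: "v1 \<notin> ?H" "u1 \<notin> ?H"
    using assms(4) conn_in_step[of E V v2 u1 v1] psd_forceD[OF f1] by auto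
  moreover have "u2 \<in> ?H"
    using conn_in_step[of E V v2 v2 u2] v2H e2 by simp
  ultimately have "u2 \<in> ?S'" "v2 \<in> V - ?S'"
    using psd_forceD[OF f1] psd_forceD[OF f2] v2H by auto
  moreover have "w = v2" if "E u2 w" and w: "conn_in E (V - ?S') v2 w" for w
  proof -
    have "conn_in E (V - S) v2 w"
    proof (rule conn_in_restrict[OF w])
      fix z assume z: "conn_in E (V - ?S') v2 z"
      then have "z \<in> ?H"
        using conn_in_mono[of E "V - ?S'" v2 z V] by blast
      then show "z \<in> V - S"
        using conn_in_memD[OF z] other by blast
    qed
    then show ?thesis
      using psd_force_unique[OF f2 \<open>E u2 w\<close>] by blast
  qed
  ultimately show ?thesis
    using psd_forceD[OF f2] by (blast intro: psd_forceI)
qed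

lemma TE_edge_sym: "TE_edge V E A B \<Longrightarrow> TE_edge V E B A"
  unfolding TE_edge_def by blast

lemma TE_edge_swap:
  assumes "graph V E" and "min_psd_forcing_set V E S" and "psd_force V E S u v"
  shows "TE_edge V E S (insert v (S - {u}))"
proof -
  have "u \<in> S" "v \<notin> S"
    using psd_forceD[OF assms(3)] by auto
  then have "S - insert v (S - {u}) = {u}" "insert v (S - {u}) - S = {v}"
    by auto
  moreover have "min_psd_forcing_set V E (insert v (S - {u}))"
    by (rule min_psd_forcing_set_swap[OF assms])
  ultimately show ?thesis
    using assms(2) unfolding TE_edge_def TE_vertices_def by simp
qed

text \<open>The two swaps share their removed or their added vertex, so they differ by a single
  exchange as well.\<close>
lemma not_acyclic_TE_two_forces:
  assumes "graph V E" and S: "min_psd_forcing_set V E S"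
    and f: "psd_force V E S u v" and f': "psd_force V E S u' v'"
    and "(u = u' \<and> v \<noteq> v') \<or> (u \<noteq> u' \<and> v = v')"
  shows "\<not> acyclic_graph (TE_vertices V E) (TE_edge V E)"
proof -
  let ?A = "insert v (S - {u})" and ?B = "insert v' (S - {u'})"
  have SA: "TE_edge V E S ?A"
    using TE_edge_swap[OF assms(1) S f] .
  have SB: "TE_edge V E S ?B"
    using TE_edge_swap[OF assms(1) S f'] .
  have uv: "u \<in> S" "v \<notin> S" "u' \<in> S" "v' \<notin> S"
    using psd_forceD[OF f] psd_forceD[OF f'] by auto
  have "\<exists>x y. ?A - ?B = {x} \<and> ?B - ?A = {y}"
    using assms(5)
  proof
    assume "u = u' \<and> v \<noteq> v'"
    then have "?A - ?B = {v} \<and> ?B - ?A = {v'}"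
      using uv by auto
    then show ?thesis by blast
  next
    assume "u \<noteq> u' \<and> v = v'"
    then have "?A - ?B = {u'} \<and> ?B - ?A = {u}"
      using uv by auto
    then show ?thesis by blast
  qed
  then have AB: "TE_edge V E ?A ?B"
    using SA SB unfolding TE_edge_def by blast
  have "S \<noteq> ?A" "S \<noteq> ?B" "?A \<noteq> ?B"
    using assms(5) uv by auto
  then have "distinct [S, ?A, ?B]"
    by simp
  moreover have "{S, ?A, ?B} \<subseteq> TE_vertices V E"
    using SA SB unfolding TE_edge_def by blast
  ultimately show ?thesis
    by (rule not_acyclic_graph_triangle[where E = "TE_edge V E", OF SA AB TE_edge_sym[OF SB]])
qed

text \<open>Induction on the white component of \<open>v\<close>: after swapping \<open>u\<close> and \<open>v\<close>, some force
  lands in a strictly smaller part of it.\<close>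
lemma not_acyclic_TE_force_other_neighbour:
  assumes "graph V E" and "min_psd_forcing_set V E S" and "psd_force V E S u v"
    and "E v z" and "z \<noteq> u"
  shows "\<not> acyclic_graph (TE_vertices V E) (TE_edge V E)"
  using assms(2-5)
proof (induction "card (comp_in E (V - S) v)" arbitrary: S u v z rule: less_induct)
  case less
  let ?C = "comp_in E (V - S) v"
  have fin: "finite ?C"
    using assms(1) comp_in_subset[of E "V - S" v] unfolding graph_def
    by (meson finite_Diff finite_subset)
  have vC: "v \<in> ?C"
    using psd_forceD[OF less.prems(2)] by (simp add: comp_in_def conn_in_refl)
  show ?case
  proof (cases "?C = {v}")
    case True
    have "z \<in> S"
    proof (rule ccontr)
      assume "z \<notin> S"
      then have "z \<in> ?C"
        using vC less.prems(3) graph_edgeD[OF assms(1) less.prems(3)]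
        by (auto simp: comp_in_def intro: conn_in_step)
      then show False
        using True graph_edgeD[OF assms(1) less.prems(3)] by simp
    qed
    moreover have "conn_in E (V - S) v w \<Longrightarrow> w = v" for w
      using True by (auto simp: comp_in_def)
    ultimately have "psd_force V E S z v"
      using psd_forceD[OF less.prems(2)] graph_edgeD[OF assms(1) less.prems(3)]
      by (auto intro: psd_forceI)
    then show ?thesis
      using not_acyclic_TE_two_forces[OF assms(1) less.prems(1,2)] less.prems(4) by blast
  next
    case False
    then obtain x where x: "x \<in> ?C" "x \<noteq> v"
      using vC by blast
    let ?S' = "insert v (S - {u})"
    have S': "min_psd_forcing_set V E ?S'"
      using min_psd_forcing_set_swap[OF assms(1) less.prems(1,2)] .
    have vu: "psd_force V E ?S' v u"
      using psd_force_swap[OF assms(1) less.prems(2)] .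
    have "x \<in> V - S"
      using x(1) comp_in_subset[of E "V - S" v] by blast
    then have "x \<in> V - ?S'"
      using x(2) by simp
    moreover have "psd_forcing_set V E ?S'"
      using min_psd_forcing_setD[OF S'] by blast
    ultimately obtain y x' where yx': "psd_force V E ?S' y x'" "conn_in E (V - ?S') x x'"
      using psd_forcing_set_force_into_component[OF assms(1)] by blast
    have x'C: "x' \<in> ?C - {v}"
      using comp_in_swap_subset[OF assms(1) less.prems(2) x(1)] yx'(2) by (auto simp: comp_in_def)
    show ?thesis
    proof (cases "\<exists>t. E x' t \<and> t \<noteq> y")
      case True
      then obtain t where t: "E x' t" "t \<noteq> y"
        by blast
      have "comp_in E (V - ?S') x' \<subset> ?C"
        using comp_in_swap_subset[OF assms(1) less.prems(2)] x'C vC by blast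
      then have "card (comp_in E (V - ?S') x') < card ?C"
        by (rule psubset_card_mono[OF fin])
      then show ?thesis
        using less.hyps S' yx'(1) t by blast
    next
      case False
      text \<open>The predecessor of \<open>x'\<close> on a path from \<open>v\<close> inside \<open>?C\<close> is a neighbour outside
        \<open>S\<close>, hence \<open>y = v\<close>: at \<open>?S'\<close>, \<open>v\<close> forces both \<open>u\<close> and \<open>x'\<close>.\<close>
      have "conn_in E (V - S) v x'" "v \<noteq> x'"
        using x'C by (auto simp: comp_in_def)
      then obtain p where p: "p \<in> V - S" "E p x'"
        using conn_in_last_step[of E "V - S" v x'] by blast
      then have "p = y"
        using False graph_edgeD[OF assms(1) p(2)] by blast
      then have "y = v"
        using psd_forceD[OF yx'(1)] p(1) by blast
      moreover have "x' \<noteq> u"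
        using x'C psd_forceD[OF less.prems(2)] comp_in_subset[of E "V - S" v] by blast
      ultimately show ?thesis
        using not_acyclic_TE_two_forces[OF assms(1) S' vu] yx'(1) by blast
    qed
  qed
qed

lemma not_acyclic_TE_large_component:
  assumes "graph V E" and "card (comp_in E V v0) \<ge> 3"
  shows "\<not> acyclic_graph (TE_vertices V E) (TE_edge V E)"
proof -
  let ?H = "comp_in E V v0"
  have small: "card ?H \<le> card H" if "finite H" "v0 \<in> H"
    and "\<And>p q. p \<in> H \<Longrightarrow> E p q \<Longrightarrow> q \<in> H" for H
  proof -
    have "?H \<subseteq> H"
      unfolding comp_in_def using conn_in_closed[of E V v0 _ H] that(2,3) by blast
    then show ?thesis
      using that(1) by (rule card_mono[rotated])
  qed
  obtain S where S: "min_psd_forcing_set V E S"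
    using min_psd_forcing_set_exists assms(1) unfolding graph_def by blast
  obtain b where "E v0 b"
    using small[of "{v0}"] assms(2) by force
  then obtain u v where f: "psd_force V E S u v" and "conn_in E V v0 v"
    using min_psd_forcing_set_force_into_component[OF assms(1) S] by blast
  show ?thesis
  proof (cases "\<exists>z. E v z \<and> z \<noteq> u")
    case True
    then show ?thesis
      using not_acyclic_TE_force_other_neighbour[OF assms(1) S f] by blast
  next
    case False
    have "\<exists>t. E u t \<and> t \<noteq> v"
    proof (rule ccontr)
      assume "\<not> ?thesis"
      then have closed: "\<And>p q. p \<in> {u, v} \<Longrightarrow> E p q \<Longrightarrow> q \<in> {u, v}"
        using False by blast
      have "conn_in E V v v0"
        using conn_in_sym[OF graph_symp[OF assms(1)] \<open>conn_in E V v0 v\<close>] .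
      then have "v0 \<in> {u, v}"
        by (rule conn_in_closed) (use closed in auto)
      then have "card ?H \<le> card {u, v}"
        using small[of "{u, v}"] closed by blast
      moreover have "card {u, v} \<le> 2"
        by (simp add: card_insert_if)
      ultimately show False
        using assms(2) by simp
    qed
    then obtain t where "E u t" "t \<noteq> v"
      by blast
    then show ?thesis
      using not_acyclic_TE_force_other_neighbour[OF assms(1) min_psd_forcing_set_swap[OF assms(1) S f]
          psd_force_swap[OF assms(1) f]] by blast
  qed
qed

lemma not_acyclic_TE_two_components:
  assumes "graph V E" and "E a b" and "E c d" and "\<not> conn_in E V a c"
  shows "\<not> acyclic_graph (TE_vertices V E) (TE_edge V E)"
proof -
  obtain S where S: "min_psd_forcing_set V E S"
    using min_psd_forcing_set_exists assms(1) unfolding graph_def by blast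
  obtain u1 v1 where f1: "psd_force V E S u1 v1" and "conn_in E V a v1"
    using min_psd_forcing_set_force_into_component[OF assms(1) S assms(2)] by blast
  obtain u2 v2 where f2: "psd_force V E S u2 v2" and "conn_in E V c v2"
    using min_psd_forcing_set_force_into_component[OF assms(1) S assms(3)] by blast
  have "\<not> conn_in E V v2 v1"
  proof
    assume "conn_in E V v2 v1"
    then have "conn_in E V a v2"
      using \<open>conn_in E V a v1\<close> conn_in_sym[OF graph_symp[OF assms(1)]] conn_in_trans by metis
    then show False
      using \<open>conn_in E V c v2\<close> assms(4) conn_in_sym[OF graph_symp[OF assms(1)]] conn_in_trans
      by metis
  qed
  then have f21: "psd_force V E (insert v1 (S - {u1})) u2 v2"
    by (rule psd_force_swap_other_component[OF assms(1) f1 f2])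
  let ?S1 = "insert v1 (S - {u1})" and ?S2 = "insert v2 (S - {u2})"
  let ?S12 = "insert v2 (?S1 - {u2})"
  have S1: "min_psd_forcing_set V E ?S1" and S2: "min_psd_forcing_set V E ?S2"
    and S12: "min_psd_forcing_set V E ?S12"
    using min_psd_forcing_set_swap[OF assms(1)] S f1 f2 f21 by blast+
  have uv: "u1 \<in> S" "v1 \<notin> S" "u2 \<in> S" "v2 \<notin> S" "u2 \<in> ?S1" "v2 \<notin> ?S1"
    using psd_forceD[OF f1] psd_forceD[OF f2] psd_forceD[OF f21] by auto
  have "?S12 - ?S2 = {v1}" "?S2 - ?S12 = {u1}"
    using uv by auto
  then have "TE_edge V E ?S12 ?S2"
    using S12 S2 unfolding TE_edge_def TE_vertices_def by simp
  moreover have "TE_edge V E S ?S1" "TE_edge V E ?S1 ?S12" "TE_edge V E ?S2 S"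
    using TE_edge_swap[OF assms(1)] TE_edge_sym S S1 f1 f2 f21 by blast+
  moreover have "distinct [S, ?S1, ?S12, ?S2]"
    using uv by auto
  ultimately show ?thesis
    by (intro not_acyclic_graph_square[where E = "TE_edge V E"]) (auto simp: TE_edge_def)
qed

theorem theorem4p8:
  fixes V :: "'a set" and E :: "'a \<Rightarrow> 'a \<Rightarrow> bool"
  assumes "graph V E"
    and "(\<exists>u v x y. E u v \<and> E x y \<and> \<not> conn_in E V u x) \<or> (\<exists>v\<in>V. card (comp_in E V v) \<ge> 3)"
  shows "\<not> (\<exists>(T :: 'b set) ET f. is_tree T ET \<and> graph_iso (TE_vertices V E) (TE_edge V E) T ET f)"
proof
  assume "\<exists>(T :: 'b set) ET f. is_tree T ET \<and> graph_iso (TE_vertices V E) (TE_edge V E) T ET f"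
  then have "acyclic_graph (TE_vertices V E) (TE_edge V E)"
    unfolding is_tree_def using graph_iso_acyclic by blast
  moreover have "\<not> acyclic_graph (TE_vertices V E) (TE_edge V E)"
    using assms(2) not_acyclic_TE_two_components[OF assms(1)]
      not_acyclic_TE_large_component[OF assms(1)] by blast
  ultimately show False
    by contradiction
qed

end
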